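(* Let $([v_{ij}:v_{ji}])$ be common lines data for planes $P_1,\dots,P_N$, and let $i,j,k,m$ be distinct indices such that the triples $(i,j,k)$ and $(i,j,m)$ strictly satisfy the spherical triangle inequalities. Choose unit-norm representatives of all the pairs involved and set $$L_{ijk,ijm}=\big(v_{ki}\cdot v_{kj}-(v_{ij}\cdot v_{ik})(v_{ji}\cdot v_{jk})\big)\,\big|\det[v_{ij},v_{im}]\det[v_{ji},v_{jm}]\big|-\sigma\big(v_{mi}\cdot v_{mj}-(v_{ij}\cdot v_{im})(v_{ji}\cdot v_{jm})\big)\,\big|\det[v_{ij},v_{ik}]\det[v_{ji},v_{jk}]\big|,$$ where $\sigma=\operatorname{sign}\big(\det[v_{ij},v_{ik}]\det[v_{ij},v_{im}]\det[v_{ji},v_{jk}]\det[v_{ji},v_{jm}]\big)$. Suppose $L_{ijk,ijm}=0$. Then for any frames $F_i,F_j,F_k$ realizing the triple $(i,j,k)$ and any frames $G_i,G_j,G_m$ realizing the triple $(i,j,m)$, there exists a unique $A\in\mathrm O(3)$ with $AF_i=G_i$ and $AF_j=G_j$.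
   Context: A frame is an ordered pair $(a,b)$ of orthonormal vectors in $\mathbb R^3$. Planes $P_1=\dots=P_N=\mathbb R^2$; a frame $F_i=(a_i,b_i)$ gives the embedding $\iota_i:P_i\to\mathbb R^3$, $\iota_i(x,y)=xa_i+yb_i$. $\mathrm O(3)$ is the group of all $3\times3$ orthogonal matrices, acting on frames by $A(a,b)=(Aa,Ab)$. Common lines data is a collection $([v_{ij}:v_{ji}])_{1\le i<j\le N}$ of elements of $\mathbb P(P_i\times P_j)$ (nonzero pairs $(v_{ij},v_{ji})\in\mathbb R^2\times\mathbb R^2$ up to nonzero scaling) with $\|v_{ij}\|^2=\|v_{ji}\|^2$; indices of a pair may be written in either order. Frames $F_i,F_j,F_k$ realize the triple $(i,j,k)$ if $\iota_i(v_{ij})=\iota_j(v_{ji})$, $\iota_i(v_{ik})=\iota_k(v_{ki})$, $\iota_j(v_{jk})=\iota_k(v_{kj})$. For a triple and representatives, $\alpha_{ijk}=\cos^{-1}\frac{v_{ij}\cdot v_{ik}}{\|v_{ij}\|\|v_{ik}\|}$, $\beta_{ijk}=\cos^{-1}\frac{v_{ji}\cdot v_{jk}}{\|v_{ji}\|\|v_{jk}\|}$, $\gamma_{ijk}=\cos^{-1}\frac{v_{ki}\cdot v_{kj}}{\|v_{ki}\|\|v_{kj}\|}$; the triple strictly satisfies the spherical triangle inequalities if for any representatives $\beta+\gamma>\alpha$, $\alpha+\gamma>\beta$, $\alpha+\beta>\gamma$, $\alpha+\beta+\gamma<2\pi$. $\det[u,w]$ denotes the determinant of the $2\times2$ matrix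 with columns $u,w$. *)

theory Defs
  imports "HOL-Analysis.Analysis"
begin

text \<open>Planes P_i = R^2 are modelled by real^2; a frame is a pair of vectors in real^3.\<close>

type_synonym frame = "(real^3) \<times> (real^3)"

definition is_frame :: "frame \<Rightarrow> bool" where
  "is_frame F \<longleftrightarrow> norm (fst F) = 1 \<and> norm (snd F) = 1 \<and> fst F \<bullet> snd F = 0"

definition emb :: "frame \<Rightarrow> real^2 \<Rightarrow> real^3" where
  "emb F x = (x $ 1) *\<^sub>R fst F + (x $ 2) *\<^sub>R snd F"

definition act :: "real^3^3 \<Rightarrow> frame \<Rightarrow> frame" where
  "act A F = (A *v fst F, A *v snd F)"

text \<open>Common lines data, given by representatives v p q = v_pq, for indices in {1..N}.\<close>
definition common_lines_data :: "nat \<Rightarrow> (nat \<Rightarrow> nat \<Rightarrow> real^2) \<Rightarrow> bool" where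
  "common_lines_data N v \<longleftrightarrow>
     (\<forall>p\<in>{1..N}. \<forall>q\<in>{1..N}. p \<noteq> q \<longrightarrow>
        (v p q, v q p) \<noteq> (0, 0) \<and> norm (v p q) ^ 2 = norm (v q p) ^ 2)"

definition realizes :: "(nat \<Rightarrow> nat \<Rightarrow> real^2) \<Rightarrow> nat \<Rightarrow> nat \<Rightarrow> nat \<Rightarrow> frame \<Rightarrow> frame \<Rightarrow> frame \<Rightarrow> bool" where
  "realizes v i j k Fi Fj Fk \<longleftrightarrow>
     emb Fi (v i j) = emb Fj (v j i) \<and>
     emb Fi (v i k) = emb Fk (v k i) \<and>
     emb Fj (v j k) = emb Fk (v k j)"

definition angle2 :: "real^2 \<Rightarrow> real^2 \<Rightarrow> real" where
  "angle2 u w = arccos ((u \<bullet> w) / (norm u * norm w))"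

definition strict_sph_tri :: "(nat \<Rightarrow> nat \<Rightarrow> real^2) \<Rightarrow> nat \<Rightarrow> nat \<Rightarrow> nat \<Rightarrow> bool" where
  "strict_sph_tri v i j k \<longleftrightarrow>
     (let \<alpha> = angle2 (v i j) (v i k); \<beta> = angle2 (v j i) (v j k); \<gamma> = angle2 (v k i) (v k j)
      in \<beta> + \<gamma> > \<alpha> \<and> \<alpha> + \<gamma> > \<beta> \<and> \<alpha> + \<beta> > \<gamma> \<and> \<alpha> + \<beta> + \<gamma> < 2 * pi)"

definition det2 :: "real^2 \<Rightarrow> real^2 \<Rightarrow> real" where
  "det2 u w = u $ 1 * w $ 2 - u $ 2 * w $ 1"

definition L_quant :: "(nat \<Rightarrow> nat \<Rightarrow> real^2) \<Rightarrow> nat \<Rightarrow> nat \<Rightarrow> nat \<Rightarrow> nat \<Rightarrow> real" where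
  "L_quant v i j k m =
     (let \<sigma> = sgn (det2 (v i j) (v i k) * det2 (v i j) (v i m) * det2 (v j i) (v j k) * det2 (v j i) (v j m))
      in (v k i \<bullet> v k j - (v i j \<bullet> v i k) * (v j i \<bullet> v j k)) * \<bar>det2 (v i j) (v i m) * det2 (v j i) (v j m)\<bar>
         - \<sigma> * (v m i \<bullet> v m j - (v i j \<bullet> v i m) * (v j i \<bullet> v j m)) * \<bar>det2 (v i j) (v i k) * det2 (v j i) (v j k)\<bar>)"

end

theory Submission
  imports Defs
begin

text \<open>Both frame pairs share their common line: \<open>c = \<iota>\<^sub>i(v\<^sub>i\<^sub>j) = \<iota>\<^sub>j(v\<^sub>j\<^sub>i)\<close>. Up to a motion of
  \<open>c\<close>, each pair is therefore determined by the unit normals \<open>p, q\<close> to \<open>c\<close> inside the two planes,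
  i.e. by the cosine \<open>t = p \<bullet> q\<close> of the dihedral angle. Computing \<open>v\<^sub>k\<^sub>i \<bullet> v\<^sub>k\<^sub>j\<close> through the
  third frame gives the spherical law of cosines
  \<open>v\<^sub>k\<^sub>i \<bullet> v\<^sub>k\<^sub>j - (v\<^sub>i\<^sub>j \<bullet> v\<^sub>i\<^sub>k)(v\<^sub>j\<^sub>i \<bullet> v\<^sub>j\<^sub>k) = t \<cdot> det[v\<^sub>i\<^sub>j,v\<^sub>i\<^sub>k] det[v\<^sub>j\<^sub>i,v\<^sub>j\<^sub>k]\<close>, and the strict
  spherical triangle inequalities say that the left side is smaller in absolute value than the
  determinant product, so \<open>\<bar>t\<bar> < 1\<close> and the determinants do not vanish. The hypothesis
  \<open>L = 0\<close> then says exactly that both triples produce the same \<open>t\<close>, and two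
  configurations \<open>(c, p, q)\<close> with equal nondegenerate Gram matrices are related by a unique
  orthogonal map.\<close>

lemma orthonormal_expansion_3:
  fixes e1 e2 e3 x :: "'a::euclidean_space"
  assumes "DIM('a) = 3"
    and "e1 \<bullet> e1 = 1" "e2 \<bullet> e2 = 1" "e3 \<bullet> e3 = 1"
    and "e1 \<bullet> e2 = 0" "e1 \<bullet> e3 = 0" "e2 \<bullet> e3 = 0"
  shows "x = (x \<bullet> e1) *\<^sub>R e1 + (x \<bullet> e2) *\<^sub>R e2 + (x \<bullet> e3) *\<^sub>R e3"
proof -
  let ?B = "{e1, e2, e3}"
  have "e1 \<noteq> e2" "e1 \<noteq> e3" "e2 \<noteq> e3" using assms by (auto simp: inner_commute)
  hence "card ?B = 3" by auto
  have "pairwise orthogonal ?B" using assms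
    by (auto simp: pairwise_def orthogonal_def inner_commute)
  moreover have "0 \<notin> ?B" using assms by auto
  ultimately have "independent ?B" by (rule pairwise_orthogonal_independent)
  hence span: "UNIV \<subseteq> span ?B"
    using card_ge_dim_independent \<open>card ?B = 3\<close> assms(1) by (metis dim_UNIV order_refl subset_UNIV)
  define r where "r = x - ((x \<bullet> e1) *\<^sub>R e1 + (x \<bullet> e2) *\<^sub>R e2 + (x \<bullet> e3) *\<^sub>R e3)"
  have "orthogonal r y" if "y \<in> ?B" for y
    using assms that by (auto simp: r_def orthogonal_def inner_diff_left inner_add_left)
      (auto simp: inner_commute)
  hence "orthogonal r r" using span by (meson UNIV_I orthogonal_to_span subsetD)
  thus ?thesis by (simp add: r_def orthogonal_def)
qed

lemma gram_schmidt_unit_normal: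
  fixes p q :: "'a::real_inner"
  assumes "p \<bullet> p = 1" "q \<bullet> q = 1" "p \<bullet> q = t" "\<bar>t\<bar> < 1"
  defines "s \<equiv> sqrt (1 - t\<^sup>2)"
  defines "n \<equiv> (1 / s) *\<^sub>R (q - t *\<^sub>R p)"
  shows "s > 0" "n \<bullet> n = 1" "p \<bullet> n = 0" "q = t *\<^sub>R p + s *\<^sub>R n"
proof -
  have t2: "t\<^sup>2 < 1" using assms(4) by (simp add: abs_square_less_1)
  show s_pos: "s > 0" unfolding s_def using t2 by simp
  have "s * s = 1 - t\<^sup>2" unfolding s_def using t2
    by (metis abs_of_nonneg diff_ge_0_iff_ge less_eq_real_def real_sqrt_abs2 real_sqrt_mult)
  moreover have "(q - t *\<^sub>R p) \<bullet> (q - t *\<^sub>R p) = 1 - t\<^sup>2"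
    using assms(1-3) by (simp add: inner_diff_left inner_diff_right inner_commute power2_eq_square)
  moreover have "n \<bullet> n = (1/s) * (1/s) * ((q - t *\<^sub>R p) \<bullet> (q - t *\<^sub>R p))"
    unfolding n_def by (simp only: inner_scaleR_left inner_scaleR_right)
  ultimately show "n \<bullet> n = 1" using s_pos t2 by simp
  show "p \<bullet> n = 0" unfolding n_def using assms(1-3) by (simp add: inner_diff_right)
  show "q = t *\<^sub>R p + s *\<^sub>R n" unfolding n_def using s_pos by simp
qed

lemma ex1_orthogonal_matrix_map_triple:
  fixes c p q c' p' q' :: "real^3"
  assumes "c \<bullet> c = 1" "p \<bullet> p = 1" "q \<bullet> q = 1" "c \<bullet> p = 0" "c \<bullet> q = 0" "p \<bullet> q = t"
    and "c' \<bullet> c' = 1" "p' \<bullet> p' = 1" "q' \<bullet> q' = 1" "c' \<bullet> p' = 0" "c' \<bullet> q' = 0" "p' \<bullet> q' = t"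
    and "\<bar>t\<bar> < 1"
  shows "\<exists>!A::real^3^3. orthogonal_matrix A \<and> A *v c = c' \<and> A *v p = p' \<and> A *v q = q'"
proof -
  define s where "s = sqrt (1 - t\<^sup>2)"
  define n where "n = (1 / s) *\<^sub>R (q - t *\<^sub>R p)"
  define n' where "n' = (1 / s) *\<^sub>R (q' - t *\<^sub>R p')"
  note N = gram_schmidt_unit_normal[OF assms(2,3,6,13), folded s_def, folded n_def]
  note N' = gram_schmidt_unit_normal[OF assms(8,9,12,13), folded s_def, folded n'_def]
  have cn: "c \<bullet> n = 0" and cn': "c' \<bullet> n' = 0"
    unfolding n_def n'_def using assms by (simp_all add: inner_diff_right)
  have expand: "x = (x \<bullet> c) *\<^sub>R c + (x \<bullet> p) *\<^sub>R p + (x \<bullet> n) *\<^sub>R n" for x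
    by (rule orthonormal_expansion_3) (use assms N cn in auto)
  define f where "f x = (x \<bullet> c) *\<^sub>R c' + (x \<bullet> p) *\<^sub>R p' + (x \<bullet> n) *\<^sub>R n'" for x
  have "linear f" unfolding f_def
    by (intro linearI) (simp_all add: inner_add_left algebra_simps)
  have "f x \<bullet> f y = x \<bullet> y" for x y
  proof -
    have "f x \<bullet> f y = x \<bullet> ((y \<bullet> c) *\<^sub>R c + (y \<bullet> p) *\<^sub>R p + (y \<bullet> n) *\<^sub>R n)"
      unfolding f_def using assms N' cn'
      by (simp add: inner_add_left inner_add_right inner_commute)
    thus ?thesis using expand[of y] by simp
  qed
  with \<open>linear f\<close> have "orthogonal_transformation f" by (simp add: orthogonal_transformation_def)
  have f_basis: "f c = c'" "f p = p'" "f n = n'" unfolding f_def using assms N cn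
    by (simp_all add: inner_commute)
  have "f q = t *\<^sub>R f p + s *\<^sub>R f n" using N(4) \<open>linear f\<close> by (metis linear_add linear_scale)
  hence "f q = q'" using f_basis N'(4) by simp
  have existence: "orthogonal_matrix (matrix f) \<and> matrix f *v c = c' \<and> matrix f *v p = p' \<and> matrix f *v q = q'"
    using \<open>orthogonal_transformation f\<close> \<open>linear f\<close> f_basis \<open>f q = q'\<close>
    by (simp add: orthogonal_transformation_matrix matrix_works)
  have "B = matrix f"
    if B: "orthogonal_matrix B \<and> B *v c = c' \<and> B *v p = p' \<and> B *v q = q'" for B
  proof -
    have "B *v n = (1 / s) *\<^sub>R (B *v q - t *\<^sub>R (B *v p))"
      by (simp add: n_def matrix_vector_mult_scaleR matrix_vector_right_distrib
          matrix_vector_mult_diff_distrib)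
    hence "B *v n = n'" using B n'_def by simp
    have "B *v x = f x" for x
      using B \<open>B *v n = n'\<close> arg_cong[OF expand[of x], of "(*v) B"]
      by (simp add: f_def matrix_vector_mult_scaleR matrix_vector_right_distrib)
    thus ?thesis using \<open>linear f\<close> by (simp add: matrix_eq matrix_works)
  qed
  with existence show ?thesis by blast
qed

definition rot90 :: "real^2 \<Rightarrow> real^2" where
  "rot90 u = (\<chi> i. if i = 1 then - (u $ 2) else u $ 1)"

lemma rot90_nth [simp]: "rot90 u $ 1 = - (u $ 2)" "rot90 u $ 2 = u $ 1"
  by (simp_all add: rot90_def)

lemma inner_vec2: "(u::real^2) \<bullet> w = u$1*w$1 + u$2*w$2"
  by (simp add: inner_vec_def sum_2)

lemma inner_rot90: "u \<bullet> rot90 u = 0" "rot90 u \<bullet> rot90 u = u \<bullet> u"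
  by (simp_all add: inner_vec2)

lemma norm_vec2_eq_1: "norm (u::real^2) = 1 \<Longrightarrow> u$1*u$1 + u$2*u$2 = 1"
  by (simp add: norm_eq_1 inner_vec2)

lemma is_frame_inner_emb:
  assumes "is_frame F"
  shows "emb F x \<bullet> emb F y = x \<bullet> y"
proof -
  have "fst F \<bullet> fst F = 1" "snd F \<bullet> snd F = 1" "fst F \<bullet> snd F = 0" "snd F \<bullet> fst F = 0"
    using assms by (auto simp: is_frame_def norm_eq_1 inner_commute)
  thus ?thesis by (simp add: emb_def inner_vec2 inner_add_left inner_add_right)
qed

lemma emb_expansion_rot90:
  assumes "norm u = 1"
  shows "emb F x = (x \<bullet> u) *\<^sub>R emb F u + det2 u x *\<^sub>R emb F (rot90 u)"
proof -
  have "(x \<bullet> u) *\<^sub>R emb F u + det2 u x *\<^sub>R emb F (rot90 u)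
      = ((x\<bullet>u) * u$1 - det2 u x * u$2) *\<^sub>R fst F + ((x\<bullet>u) * u$2 + det2 u x * u$1) *\<^sub>R snd F"
    by (simp add: emb_def algebra_simps)
  also have "(x\<bullet>u) * u$1 - det2 u x * u$2 = x$1 * (u$1*u$1 + u$2*u$2)"
    by (simp add: inner_vec2 det2_def algebra_simps)
  also have "(x\<bullet>u) * u$2 + det2 u x * u$1 = x$2 * (u$1*u$1 + u$2*u$2)"
    by (simp add: inner_vec2 det2_def algebra_simps)
  finally show ?thesis by (simp add: emb_def norm_vec2_eq_1[OF assms])
qed

lemma emb_act: "(A::real^3^3) *v emb F x = emb (act A F) x"
  by (simp add: emb_def act_def matrix_vector_mult_scaleR matrix_vector_right_distrib)

lemma act_eq_if_emb_unit_rot90: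
  fixes A :: "real^3^3"
  assumes "norm u = 1" "A *v emb F u = emb G u" "A *v emb F (rot90 u) = emb G (rot90 u)"
  shows "act A F = G"
proof -
  have "A *v emb F x = emb G x" for x
    using assms arg_cong[OF emb_expansion_rot90[OF assms(1), of F x], of "(*v) A"]
    by (simp add: emb_expansion_rot90[OF assms(1), of G x]
        matrix_vector_mult_scaleR matrix_vector_right_distrib)
  from this[of "axis 1 1"] this[of "axis 2 1"] show ?thesis
    by (simp add: act_def emb_def axis_def prod_eq_iff)
qed

text \<open>The cosine of the dihedral angle between the planes \<open>\<iota>\<^sub>F(\<real>\<^sup>2)\<close> and \<open>\<iota>\<^sub>G(\<real>\<^sup>2)\<close>
  along a common line \<open>\<iota>\<^sub>F(u) = \<iota>\<^sub>G(w)\<close>.\<close>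

definition dihedral_cos :: "frame \<Rightarrow> frame \<Rightarrow> real^2 \<Rightarrow> real^2 \<Rightarrow> real" where
  "dihedral_cos F G u w = emb F (rot90 u) \<bullet> emb G (rot90 w)"

lemma common_line_configuration:
  assumes "is_frame F" "is_frame G" "norm u = 1" "norm w = 1" "emb F u = emb G w"
  shows "emb F u \<bullet> emb F u = 1" "emb F (rot90 u) \<bullet> emb F (rot90 u) = 1"
    "emb G (rot90 w) \<bullet> emb G (rot90 w) = 1"
    "emb F u \<bullet> emb F (rot90 u) = 0" "emb F u \<bullet> emb G (rot90 w) = 0"
  using is_frame_inner_emb[OF assms(1)] is_frame_inner_emb[OF assms(2)] inner_rot90 assms(3-5)
  by (simp_all add: norm_eq_1) (metis inner_rot90(1))

lemma act_pair_eq_iff: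
  fixes A :: "real^3^3"
  assumes "norm u = 1" "norm w = 1" "emb F u = emb G w" "emb F' u = emb G' w"
  shows "(act A F = F' \<and> act A G = G') \<longleftrightarrow>
    (A *v emb F u = emb F' u \<and> A *v emb F (rot90 u) = emb F' (rot90 u) \<and>
     A *v emb G (rot90 w) = emb G' (rot90 w))"
  using assms act_eq_if_emb_unit_rot90[OF assms(1), of A F F']
    act_eq_if_emb_unit_rot90[OF assms(2), of A G G']
  by (auto simp: emb_act)

lemma ex1_orthogonal_matrix_act_pair:
  assumes "is_frame F" "is_frame G" "is_frame F'" "is_frame G'" "norm u = 1" "norm w = 1"
    and "emb F u = emb G w" "emb F' u = emb G' w"
    and "dihedral_cos F G u w = dihedral_cos F' G' u w" "\<bar>dihedral_cos F G u w\<bar> < 1"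
  shows "\<exists>!A. orthogonal_matrix A \<and> act A F = F' \<and> act A G = G'"
proof -
  note C = common_line_configuration[OF assms(1,2,5-7)]
    and C' = common_line_configuration[OF assms(3,4,5,6,8)]
  have "\<exists>!A::real^3^3. orthogonal_matrix A \<and> A *v emb F u = emb F' u \<and>
      A *v emb F (rot90 u) = emb F' (rot90 u) \<and> A *v emb G (rot90 w) = emb G' (rot90 w)"
    using assms(9,10) C C' unfolding dihedral_cos_def
    by (intro ex1_orthogonal_matrix_map_triple) auto
  thus ?thesis using act_pair_eq_iff[OF assms(5-8)] by simp
qed

lemma spherical_triangle_cos_bound:
  fixes a b g :: real
  assumes "0 \<le> a" "a \<le> pi" "0 \<le> b" "b \<le> pi" "0 \<le> g" "g \<le> pi"
    and "b + g > a" "a + g > b" "a + b > g" "a + b + g < 2 * pi"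
  shows "\<bar>cos g - cos a * cos b\<bar> < sin a * sin b"
proof -
  have "cos g < cos \<bar>a - b\<bar>"
    using assms by (intro cos_monotone_0_pi) auto
  hence upper: "cos g < cos a * cos b + sin a * sin b"
    by (metis cos_abs_real cos_diff)
  have "cos (a + b) < cos g"
  proof (cases "a + b \<le> pi")
    case True
    thus ?thesis using assms by (intro cos_monotone_0_pi) auto
  next
    case False
    hence "cos (2*pi - (a+b)) < cos g" using assms by (intro cos_monotone_0_pi) auto
    thus ?thesis by (simp add: cos_2pi_minus)
  qed
  hence lower: "cos a * cos b - sin a * sin b < cos g" by (simp add: cos_add)
  show ?thesis using upper lower by linarith
qed

lemma angle2_unit:
  assumes "norm (u::real^2) = 1" "norm (w::real^2) = 1"
  shows "cos (angle2 u w) = u \<bullet> w" "sin (angle2 u w) = \<bar>det2 u w\<bar>"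
    "0 \<le> angle2 u w" "angle2 u w \<le> pi"
proof -
  have "(det2 u w)\<^sup>2 + (u \<bullet> w)\<^sup>2 = (u$1*u$1 + u$2*u$2) * (w$1*w$1 + w$2*w$2)"
    by (simp add: det2_def inner_vec2 power2_eq_square algebra_simps)
  hence det_sq: "(det2 u w)\<^sup>2 = 1 - (u \<bullet> w)\<^sup>2"
    using norm_vec2_eq_1[OF assms(1)] norm_vec2_eq_1[OF assms(2)] by simp
  hence "\<bar>u \<bullet> w\<bar> \<le> 1" using abs_square_le_1 by (metis diff_ge_0_iff_ge zero_le_power2)
  hence bounds: "-1 \<le> u \<bullet> w" "u \<bullet> w \<le> 1" by auto
  have angle: "angle2 u w = arccos (u \<bullet> w)" using assms by (simp add: angle2_def)
  show "cos (angle2 u w) = u \<bullet> w" using angle bounds by simp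
  show "sin (angle2 u w) = \<bar>det2 u w\<bar>" unfolding angle sin_arccos[OF bounds] det_sq[symmetric]
    by simp
  show "0 \<le> angle2 u w" "angle2 u w \<le> pi"
    using angle bounds by (simp_all add: arccos_lbound arccos_ubound)
qed

lemma strict_sph_tri_bound:
  assumes "norm (v i j) = 1" "norm (v i k) = 1" "norm (v j i) = 1" "norm (v j k) = 1"
    "norm (v k i) = 1" "norm (v k j) = 1"
    and "strict_sph_tri v i j k"
  shows "\<bar>v k i \<bullet> v k j - (v i j \<bullet> v i k) * (v j i \<bullet> v j k)\<bar>
           < \<bar>det2 (v i j) (v i k) * det2 (v j i) (v j k)\<bar>"
proof -
  note A = angle2_unit[OF assms(1,2)] and B = angle2_unit[OF assms(3,4)]
    and G = angle2_unit[OF assms(5,6)]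
  have "\<bar>cos (angle2 (v k i) (v k j)) - cos (angle2 (v i j) (v i k)) * cos (angle2 (v j i) (v j k))\<bar>
      < sin (angle2 (v i j) (v i k)) * sin (angle2 (v j i) (v j k))"
    using assms(7) A B G unfolding strict_sph_tri_def Let_def
    by (intro spherical_triangle_cos_bound) auto
  thus ?thesis using A B G by (simp add: abs_mult)
qed

lemma realizes_cosine_law:
  assumes "is_frame Fi" "is_frame Fj" "is_frame Fk" "realizes v i j k Fi Fj Fk"
    and "norm (v i j) = 1" "norm (v j i) = 1"
  shows "v k i \<bullet> v k j - (v i j \<bullet> v i k) * (v j i \<bullet> v j k)
       = dihedral_cos Fi Fj (v i j) (v j i) * (det2 (v i j) (v i k) * det2 (v j i) (v j k))"
proof -
  let ?c = "emb Fi (v i j)" and ?p = "emb Fi (rot90 (v i j))" and ?q = "emb Fj (rot90 (v j i))"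
  have R: "emb Fi (v i j) = emb Fj (v j i)" "emb Fi (v i k) = emb Fk (v k i)"
    "emb Fj (v j k) = emb Fk (v k j)"
    using assms(4) by (auto simp: realizes_def)
  note C = common_line_configuration[OF assms(1,2,5,6) R(1)]
  have "v k i \<bullet> v k j = emb Fi (v i k) \<bullet> emb Fj (v j k)"
    using R is_frame_inner_emb[OF assms(3)] by simp
  also have "\<dots> = ((v i k \<bullet> v i j) *\<^sub>R ?c + det2 (v i j) (v i k) *\<^sub>R ?p) \<bullet>
      ((v j k \<bullet> v j i) *\<^sub>R ?c + det2 (v j i) (v j k) *\<^sub>R ?q)"
    using emb_expansion_rot90[OF assms(5), of Fi] emb_expansion_rot90[OF assms(6), of Fj] R(1)
    by metis
  also have "\<dots> = (v i k \<bullet> v i j) * (v j k \<bullet> v j i)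
      + det2 (v i j) (v i k) * det2 (v j i) (v j k) * (?p \<bullet> ?q)"
    using C by (simp add: inner_add_left inner_add_right inner_commute[of ?p ?c])
  finally show ?thesis by (simp add: dihedral_cos_def inner_commute algebra_simps)
qed

lemma sgn_weighted_eq_imp_eq:
  fixes a b x y :: real
  assumes "a \<noteq> 0" "b \<noteq> 0" "x * a * \<bar>b\<bar> - sgn (a * b) * (y * b) * \<bar>a\<bar> = 0"
  shows "x = y"
proof -
  have "sgn (a * b) * b * \<bar>a\<bar> = a * \<bar>b\<bar>"
    using assms(1,2) by (cases "a > 0"; cases "b > 0") (auto simp: sgn_mult)
  hence "(x - y) * (a * \<bar>b\<bar>) = 0" using assms(3) by (simp add: algebra_simps)
  thus ?thesis using assms(1,2) by simp
qed

theorem lemma1: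
  fixes N :: nat and v :: "nat \<Rightarrow> nat \<Rightarrow> real^2" and i j k m :: nat
  assumes "common_lines_data N v"
    and "i \<in> {1..N}" "j \<in> {1..N}" "k \<in> {1..N}" "m \<in> {1..N}"
    and "distinct [i, j, k, m]"
    and "strict_sph_tri v i j k" "strict_sph_tri v i j m"
    and "\<forall>(p, q) \<in> {(i, j), (i, k), (j, k), (i, m), (j, m)}. norm (v p q) = 1 \<and> norm (v q p) = 1"
    and "L_quant v i j k m = 0"
  shows "\<forall>Fi Fj Fk Gi Gj Gm.
           is_frame Fi \<and> is_frame Fj \<and> is_frame Fk \<and> realizes v i j k Fi Fj Fk \<and>
           is_frame Gi \<and> is_frame Gj \<and> is_frame Gm \<and> realizes v i j m Gi Gj Gm \<longrightarrow>
           (\<exists>!A. orthogonal_matrix A \<and> act A Fi = Gi \<and> act A Fj = Gj)"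
proof (intro allI impI)
  fix Fi Fj Fk Gi Gj Gm
  assume H: "is_frame Fi \<and> is_frame Fj \<and> is_frame Fk \<and> realizes v i j k Fi Fj Fk \<and>
           is_frame Gi \<and> is_frame Gj \<and> is_frame Gm \<and> realizes v i j m Gi Gj Gm"
  have unit: "norm (v i j) = 1" "norm (v j i) = 1" "norm (v i k) = 1" "norm (v k i) = 1"
    "norm (v j k) = 1" "norm (v k j) = 1" "norm (v i m) = 1" "norm (v m i) = 1"
    "norm (v j m) = 1" "norm (v m j) = 1" using assms(9) by auto
  define tF where "tF = dihedral_cos Fi Fj (v i j) (v j i)"
  define tG where "tG = dihedral_cos Gi Gj (v i j) (v j i)"
  define Dk where "Dk = det2 (v i j) (v i k) * det2 (v j i) (v j k)"
  define Dm where "Dm = det2 (v i j) (v i m) * det2 (v j i) (v j m)"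
  note lawF = realizes_cosine_law[of Fi Fj Fk v i j k, folded tF_def Dk_def]
    and lawG = realizes_cosine_law[of Gi Gj Gm v i j m, folded tG_def Dm_def]
  have bounds: "\<bar>tF * Dk\<bar> < \<bar>Dk\<bar>" "\<bar>tG * Dm\<bar> < \<bar>Dm\<bar>"
    using strict_sph_tri_bound[of v i j k] strict_sph_tri_bound[of v i j m] lawF lawG
      H unit assms(7,8) Dk_def Dm_def by auto
  hence "Dk \<noteq> 0" "Dm \<noteq> 0" by auto
  with bounds have "\<bar>tF\<bar> < 1" by (simp add: abs_mult)
  have "tF * Dk * \<bar>Dm\<bar> - sgn (Dk * Dm) * (tG * Dm) * \<bar>Dk\<bar> = 0"
    using assms(10) lawF lawG H unit unfolding L_quant_def Let_def Dk_def Dm_def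
    by (simp add: ac_simps)
  with \<open>Dk \<noteq> 0\<close> \<open>Dm \<noteq> 0\<close> have "tF = tG" by (rule sgn_weighted_eq_imp_eq)
  show "\<exists>!A. orthogonal_matrix A \<and> act A Fi = Gi \<and> act A Fj = Gj"
    using H unit \<open>tF = tG\<close> \<open>\<bar>tF\<bar> < 1\<close> unfolding tF_def tG_def realizes_def
    by (intro ex1_orthogonal_matrix_act_pair) auto
qed

end
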